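(* Let $p\ge2$ and $n,\ell,t$ be positive integers with $n\ge\ell$. For integers $w,r\ge0$ let $\xi_r$ be a prime with $\max(t,r)<\xi_r\le2\max(t,r)+1$ and let $\mathbf{a}^*_{r,w}\in\{0,\dots,\xi_r-1\}^t$ maximize $|\mathcal{C}_{2,t,1}(r+w,r,\mathbf{a},\xi_r)|$ over $\mathbf{a}$. Define $$\mathcal{C}^2=\bigcup_{w=0}^{\lfloor n/\ell\rfloor-1}\bigl\{\mathbf{x}\in\mathbb{Z}_p^n:\ \mu(\mathbf{x})\in\mathbb{Z}_p^{n-(w+1)\ell},\ \pi(\mathbf{x})\in\mathcal{C}_{2,t,1}(r+w,r,\mathbf{a}^*_{r,w},\xi_r)\text{ where }r=\mathrm{wt}_H(\mu(\mathbf{x}))\bigr\}.$$ Then $$|\mathcal{C}^2|\ge p^\ell\sum_{w=0}^{\lfloor n/\ell\rfloor-1}\ \sum_{r=0}^{n-(w+1)\ell}\frac{N_{p,\ell}\bigl(n-(w+1)\ell,r\bigr)\binom{r+w}{w}}{(2\max(r,t)+1)^t}.$$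
   Context: $\mathbb{Z}_p=\{0,1,\dots,p-1\}$ with arithmetic mod $p$. For $\mathbf{x}\in\mathbb{Z}_p^n$ let $\mathbf{z}\in\mathbb{Z}_p^{n-\ell}$ with $z_i=x_{i+\ell}-x_i$ ($1\le i\le n-\ell$), and write uniquely $\mathbf{z}=0^{b_1}u_10^{b_2}u_2\cdots u_r0^{b_{r+1}}$ with $u_i\in\mathbb{Z}_p\setminus\{0\}$, $b_i\ge0$. Define the duplication root $\mu(\mathbf{x})=0^{b_1\bmod\ell}u_10^{b_2\bmod\ell}u_2\cdots u_r0^{b_{r+1}\bmod\ell}$ and the binary word $\pi(\mathbf{x})=0^{\lfloor b_1/\ell\rfloor}1\,0^{\lfloor b_2/\ell\rfloor}1\cdots1\,0^{\lfloor b_{r+1}/\ell\rfloor}$ (with $r$ ones). For binary words: any $\mathbf{s}\in\{0,1\}^m$ of Hamming weight $r$ is $\mathbf{s}=0^{c_1}1\,0^{c_2}1\cdots1\,0^{c_{r+1}}$, and for a prime $\xi$ and $\mathbf{a}\in\{0,\dots,\xi-1\}^t$, $$\mathcal{C}_{2,t,1}(m,r,\mathbf{a},\xi)=\Bigl\{\mathbf{s}\in\{0,1\}^m:\ \mathrm{wt}_H(\mathbf{s})=r,\ \sum_{i=1}^{r+1}i^q c_i\equiv a_q\pmod{\xi}\ \forall\,1\le q\le t\Bigr\}.$$ $N_{p,\ell}(m,r)$ denotes the number of words in $\mathbb{Z}_p^m$ of Hamming weight $r$ containing no $\ell$ consecutive zeros. *)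

theory Defs
  imports Complex_Main "HOL-Computational_Algebra.Primes"
begin

definition words :: "nat \<Rightarrow> nat \<Rightarrow> nat list set" where
  "words p m = {y. length y = m \<and> set y \<subseteq> {..<p}}"

definition hwt :: "nat list \<Rightarrow> nat" where
  "hwt y = length (filter (\<lambda>a. a \<noteq> 0) y)"

text \<open>Zero-run lengths: for z = 0^b1 u1 0^b2 ... ur 0^b(r+1) with ui nonzero,
  zruns z = [b1, ..., b(r+1)].\<close>
fun zruns :: "nat list \<Rightarrow> nat list" where
  "zruns [] = [0]"
| "zruns (a # z) = (if a = 0 then (case zruns z of [] \<Rightarrow> [0] | b # bs \<Rightarrow> Suc b # bs)
                    else 0 # zruns z)"

fun interleave :: "nat list \<Rightarrow> nat list \<Rightarrow> nat list" where
  "interleave [] us = []"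
| "interleave (b # bs) [] = replicate b 0"
| "interleave (b # bs) (u # us) = replicate b 0 @ u # interleave bs us"

definition diffword :: "nat \<Rightarrow> nat \<Rightarrow> nat list \<Rightarrow> nat list" where
  "diffword p l x = map (\<lambda>i. (x ! (i + l) + p - x ! i) mod p) [0..<length x - l]"

definition dup_root :: "nat \<Rightarrow> nat \<Rightarrow> nat list \<Rightarrow> nat list" where
  "dup_root p l x = (let z = diffword p l x in
     interleave (map (\<lambda>b. b mod l) (zruns z)) (filter (\<lambda>a. a \<noteq> 0) z))"

definition pi_word :: "nat \<Rightarrow> nat \<Rightarrow> nat list \<Rightarrow> nat list" where
  "pi_word p l x = (let z = diffword p l x in
     interleave (map (\<lambda>b. b div l) (zruns z)) (replicate (hwt z) 1))"

text \<open>The code C_{2,t,1}(m,r,a,xi); a is a list (a_1,...,a_t), a_q = a ! (q-1).\<close>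
definition C21 :: "nat \<Rightarrow> nat \<Rightarrow> nat \<Rightarrow> nat list \<Rightarrow> nat \<Rightarrow> nat list set" where
  "C21 t m r a \<xi> = {s. length s = m \<and> set s \<subseteq> {0,1} \<and> hwt s = r \<and>
     (\<forall>q\<in>{1..t}. (\<Sum>i<length (zruns s). (i + 1) ^ q * zruns s ! i) mod \<xi> = a ! (q - 1) mod \<xi>)}"

definition avecs :: "nat \<Rightarrow> nat \<Rightarrow> nat list set" where
  "avecs t \<xi> = {a. length a = t \<and> set a \<subseteq> {..<\<xi>}}"

definition no_l_zeros :: "nat \<Rightarrow> nat list \<Rightarrow> bool" where
  "no_l_zeros l y = (\<not> (\<exists>i. i + l \<le> length y \<and> (\<forall>j<l. y ! (i + j) = 0)))"

definition Npl :: "nat \<Rightarrow> nat \<Rightarrow> nat \<Rightarrow> nat \<Rightarrow> nat" where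
  "Npl p l m r = card {y \<in> words p m. hwt y = r \<and> no_l_zeros l y}"

definition C2code :: "nat \<Rightarrow> nat \<Rightarrow> nat \<Rightarrow> nat \<Rightarrow> (nat \<Rightarrow> nat) \<Rightarrow> (nat \<Rightarrow> nat \<Rightarrow> nat list) \<Rightarrow> nat list set" where
  "C2code p n l t \<xi> astar = (\<Union>w\<in>{0..<n div l}.
     {x \<in> words p n. length (dup_root p l x) = n - (w + 1) * l \<and>
        (let r = hwt (dup_root p l x) in pi_word p l x \<in> C21 t (r + w) r (astar r w) (\<xi> r))})"

end

theory Submission
  imports Defs
begin

(* Send x to (x_1 ... x_l, mu(x), pi(x)). A zero run of length b in the difference word z splits
   as b = (b mod l) + l (b div l); the remainders are the runs of mu(x), the quotients those of
   pi(x). Conversely, when the root y has no l consecutive zeros all its runs are < l, so y and any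
   binary s of the same weight glue back to a difference word z, and z together with an arbitrary
   prefix of length l determines x. Hence the layer of C^2 with root length m = n - (w + 1) l has
   at least p^l sum_r N_{p,l}(m, r) |C(r + w, r, astar r w)| elements. Finally the xi_r^t codes
   C(r + w, r, a) cover all binom(r + w, r) binary words of weight r, so the largest one has at
   least binom(r + w, w) / xi_r^t >= binom(r + w, w) / (2 max(r, t) + 1)^t elements. *)

lemma zruns_not_Nil: "zruns z \<noteq> []"
  by (induction z) (auto split: list.split)

lemma length_zruns: "length (zruns z) = hwt z + 1"
  unfolding hwt_def by (induction z) (auto split: list.split)

lemma hwt_le_length: "hwt y \<le> length y"
  unfolding hwt_def by simp

lemma zruns_replicate_append: "zruns (replicate k 0 @ v) = (hd (zruns v) + k) # tl (zruns v)"
  by (induction k) (use zruns_not_Nil in \<open>auto simp: neq_Nil_conv\<close>)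

lemma interleave_zruns_filter: "interleave (zruns z) (filter (\<lambda>a. a \<noteq> 0) z) = z"
proof (induction z)
  case (Cons a z)
  obtain b bs where "zruns z = b # bs"
    using zruns_not_Nil by (cases "zruns z") auto
  with Cons show ?case
    by (cases "filter (\<lambda>a. a \<noteq> 0) z") auto
qed simp

lemma zruns_filter_interleave:
  assumes "length bs = length us + 1" and "\<forall>u\<in>set us. u \<noteq> 0"
  shows "zruns (interleave bs us) = bs \<and> filter (\<lambda>a. a \<noteq> 0) (interleave bs us) = us"
  using assms
proof (induction us arbitrary: bs)
  case Nil
  then obtain b where "bs = [b]" by (auto simp: length_Suc_conv)
  then show ?case using zruns_replicate_append[of b "[]"] by simp
next
  case (Cons u us)
  then obtain b bs' where "bs = b # bs'" by (auto simp: length_Suc_conv)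
  with Cons show ?case using zruns_replicate_append[of b "u # interleave bs' us"] by simp
qed

lemma length_interleave:
  "length bs = length us + 1 \<Longrightarrow> length (interleave bs us) = sum_list bs + length us"
proof (induction us arbitrary: bs)
  case (Cons u us)
  then show ?case by (cases bs) auto
qed (auto simp: length_Suc_conv)

lemma replicate_zero_infix_interleave:
  "length bs = length us + 1 \<Longrightarrow> b \<in> set bs \<Longrightarrow>
   \<exists>xs ys. interleave bs us = xs @ replicate b 0 @ ys"
proof (induction us arbitrary: bs)
  case Nil
  then have "interleave bs [] = [] @ replicate b 0 @ []" by (auto simp: length_Suc_conv)
  then show ?case by blast
next
  case (Cons u us)
  then obtain c bs' where bs: "bs = c # bs'" by (auto simp: length_Suc_conv)
  show ?case
  proof (cases "b = c")
    case True
    with bs show ?thesis by (intro exI[of _ "[]"] exI[of _ "u # interleave bs' us"]) simp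
  next
    case False
    with Cons bs obtain xs ys where "interleave bs' us = xs @ replicate b 0 @ ys" by fastforce
    with bs show ?thesis by (intro exI[of _ "replicate c 0 @ u # xs"] exI[of _ ys]) simp
  qed
qed

lemma zruns_less_if_no_l_zeros:
  assumes "no_l_zeros l y" and "b \<in> set (zruns y)"
  shows "b < l"
proof (rule ccontr)
  assume "\<not> b < l"
  obtain xs ys where y: "y = xs @ replicate b 0 @ ys"
    using replicate_zero_infix_interleave[OF _ assms(2), of "filter (\<lambda>a. a \<noteq> 0) y"]
      interleave_zruns_filter[of y]
    by (auto simp: length_zruns hwt_def)
  have "y ! (length xs + j) = 0" if "j < l" for j
    using that \<open>\<not> b < l\<close> by (simp add: y nth_append)
  moreover have "length xs + l \<le> length y"
    using \<open>\<not> b < l\<close> by (simp add: y)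
  ultimately show False
    using assms(1) unfolding no_l_zeros_def by blast
qed

lemma filter_nonzero_binary: "set s \<subseteq> {0,1} \<Longrightarrow> filter (\<lambda>a. a \<noteq> (0::nat)) s = replicate (hwt s) 1"
  unfolding hwt_def by (induction s) auto

(* Entry i of the word with prefix pre and difference word z; the disjunct l = 0 only ensures
   termination. *)
fun integrate :: "nat \<Rightarrow> nat \<Rightarrow> nat list \<Rightarrow> nat list \<Rightarrow> nat \<Rightarrow> nat" where
  "integrate p l pre z i =
     (if i < l \<or> l = 0 then pre ! i else (integrate p l pre z (i - l) + z ! (i - l)) mod p)"

declare integrate.simps [simp del]

lemma add_mod_diff_mod_cancel:
  fixes a c p :: nat
  assumes "a < p" and "c < p"
  shows "((a + c) mod p + p - a) mod p = c"
proof (cases "a + c < p")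
  case True
  with assms show ?thesis by simp
next
  case False
  then have "(a + c) mod p = a + c - p"
    using assms by (simp add: le_mod_geq)
  with assms False show ?thesis by simp
qed

lemma exists_word_with_prefix_and_diffword:
  assumes pre: "pre \<in> words p l" and z: "z \<in> words p (n - l)" and "l \<le> n" "0 < l"
  shows "\<exists>x \<in> words p n. take l x = pre \<and> diffword p l x = z"
proof -
  define x where "x = map (integrate p l pre z) [0..<n]"
  have lp: "length pre = l" "set pre \<subseteq> {..<p}" using pre by (auto simp: words_def)
  have lz: "length z = n - l" "set z \<subseteq> {..<p}" using z by (auto simp: words_def)
  have "0 < p" using lp \<open>0 < l\<close> by (cases pre) auto
  have bound: "integrate p l pre z i < p" if "i < n" for i
    using lp \<open>0 < p\<close> \<open>0 < l\<close> nth_mem[of i pre]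
    by (auto simp: integrate.simps[of p l pre z i] subset_iff)
  have "x \<in> words p n" unfolding words_def x_def using bound by auto
  moreover have "take l x = pre"
    using lp \<open>l \<le> n\<close> by (intro nth_equalityI) (auto simp: x_def integrate.simps)
  moreover have "diffword p l x = z"
  proof (intro nth_equalityI)
    show "length (diffword p l x) = length z" using lz by (simp add: diffword_def x_def)
    fix i assume "i < length (diffword p l x)"
    then have i: "i < n - l" by (simp add: diffword_def x_def)
    have "x ! (i + l) = (x ! i + z ! i) mod p"
      using i \<open>0 < l\<close> by (simp add: x_def integrate.simps[of p l pre z "i + l"])
    moreover have "z ! i < p" using lz i nth_mem[of i z] by (auto simp: subset_iff)
    ultimately show "diffword p l x ! i = z ! i"
      using i bound[of i] add_mod_diff_mod_cancel by (simp add: diffword_def x_def)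
  qed
  ultimately show ?thesis by blast
qed

lemma exists_diffword_with_root_and_pi:
  assumes "0 < l" "0 < p" and y: "y \<in> words p m" "no_l_zeros l y"
    and s: "length s = hwt y + w" "set s \<subseteq> {0,1}" "hwt s = hwt y"
  shows "\<exists>z \<in> words p (m + w * l).
           interleave (map (\<lambda>b. b mod l) (zruns z)) (filter (\<lambda>a. a \<noteq> 0) z) = y \<and>
           interleave (map (\<lambda>b. b div l) (zruns z)) (replicate (hwt z) 1) = s"
proof -
  define c where "c = zruns y"
  define d where "d = zruns s"
  define u where "u = filter (\<lambda>a. a \<noteq> 0) y"
  define z where "z = interleave (map2 (\<lambda>a b. a + l * b) c d) u"
  have lengths: "length c = hwt y + 1" "length d = hwt y + 1" "length u = hwt y"
    using s(3) by (simp_all add: c_def d_def u_def length_zruns hwt_def)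
  have same_length: "length c = length d" using lengths by simp
  have small_runs: "\<forall>b\<in>set c. b < l"
    using zruns_less_if_no_l_zeros[OF y(2)] by (simp add: c_def)
  have digits: "map (\<lambda>b. b mod l) (map2 (\<lambda>a b. a + l * b) c d) = c \<and>
                    map (\<lambda>b. b div l) (map2 (\<lambda>a b. a + l * b) c d) = d"
    using same_length small_runs \<open>0 < l\<close> by (induction c d rule: list_induct2) auto
  have sum_runs: "sum_list (map2 (\<lambda>a b. a + l * b) c d) = sum_list c + l * sum_list d"
    using same_length by (induction c d rule: list_induct2) (auto simp: algebra_simps)
  have "zruns z = map2 (\<lambda>a b. a + l * b) c d \<and> filter (\<lambda>a. a \<noteq> 0) z = u"
    unfolding z_def by (rule zruns_filter_interleave) (use lengths in \<open>simp_all add: u_def\<close>)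
  then have z_runs: "zruns z = map2 (\<lambda>a b. a + l * b) c d" and z_nonzero: "filter (\<lambda>a. a \<noteq> 0) z = u"
    by simp_all
  have y_eq: "y = interleave c u"
    unfolding c_def u_def by (rule interleave_zruns_filter[symmetric])
  have s_eq: "s = interleave d (replicate (hwt y) 1)"
    using interleave_zruns_filter[of s] filter_nonzero_binary[OF s(2)] s(3) by (simp add: d_def)
  have "length y = m" using y(1) by (simp add: words_def)
  then have m_eq: "m = sum_list c + hwt y"
    using y_eq length_interleave[of c u] lengths by simp
  have w_eq: "w = sum_list d"
    using s(1) s_eq length_interleave[of d "replicate (hwt y) 1"] lengths by simp
  have "length z = sum_list (map2 (\<lambda>a b. a + l * b) c d) + hwt y"
    using length_interleave[of "map2 (\<lambda>a b. a + l * b) c d" u] lengths by (simp add: z_def)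
  then have "length z = m + w * l"
    using sum_runs m_eq w_eq by (simp add: mult.commute)
  moreover have "set z \<subseteq> {..<p}"
  proof
    fix a assume "a \<in> set z"
    moreover have "set (filter (\<lambda>a. a \<noteq> 0) z) \<subseteq> set y" unfolding z_nonzero u_def by auto
    ultimately have "a = 0 \<or> a \<in> set y" by auto
    then show "a \<in> {..<p}" using y(1) \<open>0 < p\<close> by (auto simp: words_def)
  qed
  ultimately have z_word: "z \<in> words p (m + w * l)" by (simp add: words_def)
  have hwt_z: "hwt z = hwt y" using z_nonzero lengths by (simp add: hwt_def)
  show ?thesis
  proof (intro bexI conjI)
    show "interleave (map (\<lambda>b. b mod l) (zruns z)) (filter (\<lambda>a. a \<noteq> 0) z) = y"
      unfolding z_runs z_nonzero using digits y_eq by simp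
    show "interleave (map (\<lambda>b. b div l) (zruns z)) (replicate (hwt z) 1) = s"
      unfolding z_runs hwt_z using digits s_eq by simp
  qed (rule z_word)
qed

lemma exists_word_with_prefix_root_and_pi:
  assumes "0 < l" and pre: "pre \<in> words p l" and y: "y \<in> words p m" "no_l_zeros l y"
    and s: "length s = hwt y + w" "set s \<subseteq> {0,1}" "hwt s = hwt y"
    and n: "n = m + (w + 1) * l"
  shows "\<exists>x \<in> words p n. take l x = pre \<and> dup_root p l x = y \<and> pi_word p l x = s"
proof -
  have "0 < p" using pre \<open>0 < l\<close> by (cases p) (auto simp: words_def)
  then obtain z where z: "z \<in> words p (m + w * l)"
    "interleave (map (\<lambda>b. b mod l) (zruns z)) (filter (\<lambda>a. a \<noteq> 0) z) = y"
    "interleave (map (\<lambda>b. b div l) (zruns z)) (replicate (hwt z) 1) = s"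
    using exists_diffword_with_root_and_pi[OF \<open>0 < l\<close> _ y s] by blast
  moreover obtain x where "x \<in> words p n" "take l x = pre" "diffword p l x = z"
    using exists_word_with_prefix_and_diffword[OF pre _ _ \<open>0 < l\<close>, of z n] z(1) n by auto
  ultimately show ?thesis by (auto simp: dup_root_def pi_word_def Let_def)
qed

lemma finite_words: "finite (words p m)"
  unfolding words_def using finite_lists_length_eq[of "{..<p}" m] by (simp add: conj_commute)

lemma card_words: "card (words p m) = p ^ m"
  unfolding words_def using card_lists_length_eq[of "{..<p}" m] by (simp add: conj_commute)

lemma finite_avecs: "finite (avecs t \<xi>)"
  unfolding avecs_def using finite_lists_length_eq[of "{..<\<xi>}" t] by (simp add: conj_commute)

lemma card_avecs: "card (avecs t \<xi>) = \<xi> ^ t"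
  unfolding avecs_def using card_lists_length_eq[of "{..<\<xi>}" t] by (simp add: conj_commute)

lemma finite_C21: "finite (C21 t m r a \<xi>)"
proof (rule finite_subset)
  show "C21 t m r a \<xi> \<subseteq> {s. set s \<subseteq> {0,1} \<and> length s = m}" unfolding C21_def by auto
qed (rule finite_lists_length_eq, simp)

lemma binary_words_eq_shuffles:
  assumes "r \<le> m"
  shows "{s. length s = m \<and> set s \<subseteq> {0,1} \<and> hwt s = r} =
         shuffles (replicate r 1) (replicate (m - r) (0::nat))"
proof (intro set_eqI iffI)
  fix s :: "nat list" assume "s \<in> {s. length s = m \<and> set s \<subseteq> {0,1} \<and> hwt s = r}"
  then have s: "length s = m" "set s \<subseteq> {0,1}" "hwt s = r" by auto
  have "filter (\<lambda>a. a \<noteq> 0) s = replicate r 1"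
    using filter_nonzero_binary[OF s(2)] s(3) by simp
  moreover have "filter (\<lambda>a. \<not> a \<noteq> 0) s = replicate (m - r) 0"
  proof -
    have "length (filter (\<lambda>a. \<not> a \<noteq> 0) s) = m - r"
      using sum_length_filter_compl[of "\<lambda>a. a \<noteq> 0" s] s by (simp add: hwt_def)
    moreover have "filter (\<lambda>a. a = 0) s = replicate (length (filter (\<lambda>a. a = 0) s)) 0"
      by (induction s) auto
    ultimately show ?thesis by simp
  qed
  ultimately show "s \<in> shuffles (replicate r 1) (replicate (m - r) 0)"
    using partition_in_shuffles[of s "\<lambda>a. a \<noteq> 0"] by simp
next
  fix s :: "nat list" assume s: "s \<in> shuffles (replicate r 1) (replicate (m - r) 0)"
  have "filter (\<lambda>a. a \<noteq> 0) s \<in> filter (\<lambda>a. a \<noteq> 0) ` shuffles (replicate r 1) (replicate (m - r) 0)"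
    using s by (rule imageI)
  then have "filter (\<lambda>a. a \<noteq> 0) s = replicate r 1"
    unfolding filter_shuffles by simp
  then have "hwt s = r" by (simp add: hwt_def)
  moreover have "length s = m" using length_shuffles[OF s] assms by simp
  moreover have "set s \<subseteq> {0,1}" using set_shuffles[OF s] by auto
  ultimately show "s \<in> {s. length s = m \<and> set s \<subseteq> {0,1} \<and> hwt s = r}" by simp
qed

lemma card_binary_words: "card {s. length s = m \<and> set s \<subseteq> {0,1} \<and> hwt s = r} = m choose r"
proof (cases "r \<le> m")
  case True
  then show ?thesis
    unfolding binary_words_eq_shuffles[OF True]
    by (subst card_disjoint_shuffles) (auto simp: set_replicate_conv_if)
next
  case False
  then have "{s. length s = m \<and> set s \<subseteq> {0,1} \<and> hwt s = r} = {}"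
    using hwt_le_length by fastforce
  with False show ?thesis by (simp only: card.empty) simp
qed

lemma binomial_le_card_C21_max:
  assumes "0 < \<xi>" and "a0 \<in> avecs t \<xi>"
    and max: "\<And>a. a \<in> avecs t \<xi> \<Longrightarrow> card (C21 t m r a \<xi>) \<le> card (C21 t m r a0 \<xi>)"
  shows "m choose r \<le> \<xi> ^ t * card (C21 t m r a0 \<xi>)"
proof -
  let ?B = "{s. length s = m \<and> set s \<subseteq> {0,1} \<and> hwt s = r}"
  have cover: "?B \<subseteq> (\<Union>a\<in>avecs t \<xi>. C21 t m r a \<xi>)"
  proof
    fix s assume s: "s \<in> ?B"
    define F where "F q = (\<Sum>i<length (zruns s). (i + 1) ^ q * zruns s ! i) mod \<xi>" for q
    define syndrome where "syndrome = map F [1..<t + 1]"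
    have syndrome_nth: "syndrome ! (q - 1) = F q" if "1 \<le> q" "q \<le> t" for q
      using that by (simp add: syndrome_def del: upt_Suc)
    have "syndrome \<in> avecs t \<xi>" using \<open>0 < \<xi>\<close> by (auto simp: syndrome_def avecs_def F_def)
    moreover have "s \<in> C21 t m r syndrome \<xi>"
      using s syndrome_nth by (simp add: C21_def F_def)
    ultimately show "s \<in> (\<Union>a\<in>avecs t \<xi>. C21 t m r a \<xi>)" by blast
  qed
  have "m choose r = card ?B" by (rule card_binary_words[symmetric])
  also have "\<dots> \<le> card (\<Union>a\<in>avecs t \<xi>. C21 t m r a \<xi>)"
    using cover finite_avecs finite_C21 by (intro card_mono) auto
  also have "\<dots> \<le> (\<Sum>a\<in>avecs t \<xi>. card (C21 t m r a \<xi>))"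
    using finite_avecs by (rule card_UN_le)
  also have "\<dots> \<le> card (avecs t \<xi>) * card (C21 t m r a0 \<xi>)"
    using sum_bounded_above[of "avecs t \<xi>" "\<lambda>a. card (C21 t m r a \<xi>)"] max by simp
  finally show ?thesis by (simp add: card_avecs)
qed

lemma binomial_div_le_card_C21_max:
  assumes "0 < \<xi>" and "\<xi> \<le> B" and "a0 \<in> avecs t \<xi>"
    and "\<And>a. a \<in> avecs t \<xi> \<Longrightarrow> card (C21 t m r a \<xi>) \<le> card (C21 t m r a0 \<xi>)"
  shows "real (m choose r) / real B ^ t \<le> real (card (C21 t m r a0 \<xi>))"
proof -
  have "real (m choose r) \<le> real \<xi> ^ t * real (card (C21 t m r a0 \<xi>))"
    using binomial_le_card_C21_max[OF assms(1,3,4)] by (metis of_nat_le_iff of_nat_mult of_nat_power)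
  also have "\<dots> \<le> real B ^ t * real (card (C21 t m r a0 \<xi>))"
    using assms(2) by (intro mult_right_mono power_mono) auto
  finally show ?thesis
    using assms(1,2) by (simp add: divide_le_eq mult.commute)
qed

definition C2layer ::
    "nat \<Rightarrow> nat \<Rightarrow> nat \<Rightarrow> nat \<Rightarrow> (nat \<Rightarrow> nat) \<Rightarrow> (nat \<Rightarrow> nat \<Rightarrow> nat list) \<Rightarrow> nat \<Rightarrow> nat list set"
  where "C2layer p n l t \<xi> astar w = {x \<in> words p n. length (dup_root p l x) = n - (w + 1) * l \<and>
     (let r = hwt (dup_root p l x) in pi_word p l x \<in> C21 t (r + w) r (astar r w) (\<xi> r))}"

lemma mult_le_if_less_div: "0 < l \<Longrightarrow> w < n div l \<Longrightarrow> (w + 1) * l \<le> n"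
  for l w n :: nat
  by (metis Suc_eq_plus1 Suc_leI less_eq_div_iff_mult_less_eq)

lemma C2code_eq_UN_C2layer: "C2code p n l t \<xi> astar = (\<Union>w<n div l. C2layer p n l t \<xi> astar w)"
  unfolding C2code_def C2layer_def atLeast0LessThan ..

lemma card_C2code:
  assumes "0 < l"
  shows "card (C2code p n l t \<xi> astar) = (\<Sum>w<n div l. card (C2layer p n l t \<xi> astar w))"
  unfolding C2code_eq_UN_C2layer
proof (rule card_UN_disjoint)
  show "\<forall>w\<in>{..<n div l}. finite (C2layer p n l t \<xi> astar w)"
    using finite_words by (simp add: C2layer_def)
  show "\<forall>i\<in>{..<n div l}. \<forall>j\<in>{..<n div l}. i \<noteq> j \<longrightarrow>
          C2layer p n l t \<xi> astar i \<inter> C2layer p n l t \<xi> astar j = {}"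
  proof (intro ballI impI)
    fix i j assume "i \<in> {..<n div l}" "j \<in> {..<n div l}" "i \<noteq> j"
    then have "(i + 1) * l \<le> n" "(j + 1) * l \<le> n" "(i + 1) * l \<noteq> (j + 1) * l"
      using assms mult_le_if_less_div[of l i n] mult_le_if_less_div[of l j n] by auto
    then have "n - (i + 1) * l \<noteq> n - (j + 1) * l" by linarith
    then show "C2layer p n l t \<xi> astar i \<inter> C2layer p n l t \<xi> astar j = {}"
      by (auto simp: C2layer_def)
  qed
qed simp

lemma card_Sigma_no_l_zeros_by_weight:
  assumes "\<And>r. finite (F r)"
  shows "card (SIGMA y:{y \<in> words p m. no_l_zeros l y}. F (hwt y)) =
         (\<Sum>r=0..m. Npl p l m r * card (F r))"
proof -
  let ?Y = "{y \<in> words p m. no_l_zeros l y}"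
  have "finite ?Y" using finite_words by simp
  then have "card (SIGMA y:?Y. F (hwt y)) = (\<Sum>y\<in>?Y. card (F (hwt y)))"
    using assms by simp
  also have "\<dots> = (\<Sum>r=0..m. \<Sum>y\<in>{y \<in> ?Y. hwt y = r}. card (F (hwt y)))"
    using \<open>finite ?Y\<close> hwt_le_length by (intro sum.group[symmetric]) (auto simp: words_def)
  also have "\<dots> = (\<Sum>r=0..m. Npl p l m r * card (F r))"
    by (intro sum.cong refl) (simp add: Npl_def conj_ac)
  finally show ?thesis .
qed

lemma card_C2layer_ge:
  assumes "0 < l" and n: "n = m + (w + 1) * l"
  shows "p ^ l * (\<Sum>r=0..m. Npl p l m r * card (C21 t (r + w) r (astar r w) (\<xi> r)))
           \<le> card (C2layer p n l t \<xi> astar w)"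
proof -
  define E where "E = (SIGMA y:{y \<in> words p m. no_l_zeros l y}.
                         C21 t (hwt y + w) (hwt y) (astar (hwt y) w) (\<xi> (hwt y)))"
  define G where "G x = (take l x, dup_root p l x, pi_word p l x)" for x
  have "p ^ l * (\<Sum>r=0..m. Npl p l m r * card (C21 t (r + w) r (astar r w) (\<xi> r))) =
        card (words p l \<times> E)"
    using card_Sigma_no_l_zeros_by_weight[of "\<lambda>r. C21 t (r + w) r (astar r w) (\<xi> r)"]
    by (simp add: E_def card_cartesian_product card_words finite_C21)
  also have "\<dots> \<le> card (G ` C2layer p n l t \<xi> astar w)"
  proof (intro card_mono subsetI)
    show "finite (G ` C2layer p n l t \<xi> astar w)"
      using finite_words by (simp add: C2layer_def)
    fix e assume "e \<in> words p l \<times> E"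
    then obtain pre y s where e: "e = (pre, y, s)" "pre \<in> words p l"
      and y: "y \<in> words p m" "no_l_zeros l y"
      and s: "s \<in> C21 t (hwt y + w) (hwt y) (astar (hwt y) w) (\<xi> (hwt y))"
      by (auto simp: E_def)
    then obtain x where x: "x \<in> words p n" "take l x = pre" "dup_root p l x = y" "pi_word p l x = s"
      using exists_word_with_prefix_root_and_pi[OF \<open>0 < l\<close> e(2) y _ _ _ n] by (auto simp: C21_def)
    then have "x \<in> C2layer p n l t \<xi> astar w"
      using s y(1) n by (simp add: C2layer_def words_def)
    with x e(1) show "e \<in> G ` C2layer p n l t \<xi> astar w"
      by (force simp: G_def)
  qed
  also have "\<dots> \<le> card (C2layer p n l t \<xi> astar w)"
    using finite_words by (intro card_image_le) (simp add: C2layer_def)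
  finally show ?thesis .
qed

lemma card_C2layer_ge_binomial_sum:
  assumes "0 < l" and "w < n div l" and xi_bound: "\<And>r. 0 < \<xi> r \<and> \<xi> r \<le> B r"
    and astar_mem: "\<And>r. astar r w \<in> avecs t (\<xi> r)"
    and astar_max: "\<And>r a. a \<in> avecs t (\<xi> r) \<Longrightarrow>
        card (C21 t (r + w) r a (\<xi> r)) \<le> card (C21 t (r + w) r (astar r w) (\<xi> r))"
  shows "real p ^ l * (\<Sum>r=0..n - (w + 1) * l.
           real (Npl p l (n - (w + 1) * l) r) * real ((r + w) choose w) / real (B r) ^ t)
         \<le> real (card (C2layer p n l t \<xi> astar w))"
proof -
  have term_le: "real ((r + w) choose w) / real (B r) ^ t
                   \<le> real (card (C21 t (r + w) r (astar r w) (\<xi> r)))" for r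
  proof -
    have "(r + w) choose w = (r + w) choose r"
      using binomial_symmetric[of w "r + w"] by simp
    then show ?thesis
      using binomial_div_le_card_C21_max[OF _ _ astar_mem astar_max] xi_bound[of r] by simp
  qed
  have n: "n = (n - (w + 1) * l) + (w + 1) * l"
    using mult_le_if_less_div[OF assms(1,2)] by simp
  have "real p ^ l * (\<Sum>r=0..n - (w + 1) * l.
          real (Npl p l (n - (w + 1) * l) r) * real ((r + w) choose w) / real (B r) ^ t)
        \<le> real (p ^ l * (\<Sum>r=0..n - (w + 1) * l.
          Npl p l (n - (w + 1) * l) r * card (C21 t (r + w) r (astar r w) (\<xi> r))))"
    using term_le
    by (simp add: sum_mono mult_left_mono times_divide_eq_right[symmetric] del: times_divide_eq_right)
  also have "\<dots> \<le> real (card (C2layer p n l t \<xi> astar w))"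
    unfolding of_nat_le_iff by (rule card_C2layer_ge[OF \<open>0 < l\<close> n])
  finally show ?thesis .
qed

theorem lemma7:
  fixes p n l t :: nat and \<xi> :: "nat \<Rightarrow> nat" and astar :: "nat \<Rightarrow> nat \<Rightarrow> nat list"
  assumes "p \<ge> 2" and "n > 0" and "l > 0" and "t > 0" and "n \<ge> l"
    and xi: "\<And>r. prime (\<xi> r) \<and> max t r < \<xi> r \<and> \<xi> r \<le> 2 * max t r + 1"
    and astar_mem: "\<And>r w. astar r w \<in> avecs t (\<xi> r)"
    and astar_max: "\<And>r w a. a \<in> avecs t (\<xi> r) \<Longrightarrow>
        card (C21 t (r + w) r a (\<xi> r)) \<le> card (C21 t (r + w) r (astar r w) (\<xi> r))"
  shows "real (card (C2code p n l t \<xi> astar)) \<ge>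
    real p ^ l * (\<Sum>w<n div l. \<Sum>r=0..n - (w + 1) * l.
       real (Npl p l (n - (w + 1) * l) r) * real ((r + w) choose w) / real (2 * max r t + 1) ^ t)"
proof -
  have xi_bound: "0 < \<xi> r \<and> \<xi> r \<le> 2 * max r t + 1" for r
    using xi[of r] by (auto simp: prime_gt_0_nat max.commute)
  have "real p ^ l * (\<Sum>r=0..n - (w + 1) * l.
      real (Npl p l (n - (w + 1) * l) r) * real ((r + w) choose w) / real (2 * max r t + 1) ^ t)
      \<le> real (card (C2layer p n l t \<xi> astar w))" if "w < n div l" for w
    using card_C2layer_ge_binomial_sum[where astar = astar,
                                       OF \<open>l > 0\<close> that xi_bound astar_mem astar_max] .
  then have "real p ^ l * (\<Sum>w<n div l. \<Sum>r=0..n - (w + 1) * l.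
      real (Npl p l (n - (w + 1) * l) r) * real ((r + w) choose w) / real (2 * max r t + 1) ^ t)
      \<le> (\<Sum>w<n div l. real (card (C2layer p n l t \<xi> astar w)))"
    by (subst sum_distrib_left) (intro sum_mono, simp)
  also have "\<dots> = real (card (C2code p n l t \<xi> astar))"
    by (simp add: card_C2code[OF \<open>l > 0\<close>])
  finally show ?thesis .
qed

end
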